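(* For a loss $\rho$ and prior $\pi$ on $\mathbb R$ such that the M-posterior has finite variance, for every $\tau\in(0,1)$, $\varepsilon^*(T_\tau,X^n)\ge\varepsilon^*_{W_2}(\pi_n^\rho,X^n)$.
   Context: Location M-posterior: for $Y=(y_1,\dots,y_n)\in\mathbb R^n$, $\pi_n^\rho(\theta\mid Y)\propto\pi(\theta)\exp(-\sum_i\rho(y_i-\theta))$; posterior left $\tau$-quantile $T_\tau(Y)=\inf\{\theta:\int_{-\infty}^\theta\pi_n^\rho(\theta'\mid Y)d\theta'\ge\tau\}$. $\mathcal B(X^n,m)$: samples differing from $X^n$ in at most $m$ entries. Posterior breakdown point $\varepsilon^*_{W_2}(\pi_n^\rho,X^n)=\min\{m/n:\sup_{Y\in\mathcal B(X^n,m)}W_2(\pi_n^\rho(\cdot\mid Y),\pi_n^\rho(\cdot\mid X^n))=\infty\}$ ($W_2$ the 2-Wasserstein distance). Finite-sample breakdown point of a statistic $T$: $\varepsilon^*(T,X^n)=\min\{m/n:\sup_{Y\in\mathcal B(X^n,m)}|T(Y)-T(X^n)|=\infty\}$. *)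

theory Defs
  imports "HOL-Probability.Probability"
begin

definition mpost_dens :: "(real \<Rightarrow> real) \<Rightarrow> (real \<Rightarrow> real) \<Rightarrow> real list \<Rightarrow> real \<Rightarrow> real" where
  "mpost_dens \<rho> \<pi> Y \<theta> = \<pi> \<theta> * exp (- (\<Sum>y\<leftarrow>Y. \<rho> (y - \<theta>)))"

definition mpost_norm :: "(real \<Rightarrow> real) \<Rightarrow> (real \<Rightarrow> real) \<Rightarrow> real list \<Rightarrow> ennreal" where
  "mpost_norm \<rho> \<pi> Y = (\<integral>\<^sup>+ \<theta>. ennreal (mpost_dens \<rho> \<pi> Y \<theta>) \<partial>lborel)"

definition mpost :: "(real \<Rightarrow> real) \<Rightarrow> (real \<Rightarrow> real) \<Rightarrow> real list \<Rightarrow> real measure" where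
  "mpost \<rho> \<pi> Y = density lborel
     (\<lambda>\<theta>. ennreal (mpost_dens \<rho> \<pi> Y \<theta> / enn2real (mpost_norm \<rho> \<pi> Y)))"

definition post_quantile :: "(real \<Rightarrow> real) \<Rightarrow> (real \<Rightarrow> real) \<Rightarrow> real \<Rightarrow> real list \<Rightarrow> real" where
  "post_quantile \<rho> \<pi> \<tau> Y = Inf {\<theta>. measure (mpost \<rho> \<pi> Y) {..\<theta>} \<ge> \<tau>}"

definition contam :: "real list \<Rightarrow> nat \<Rightarrow> real list set" where
  "contam X m = {Y. length Y = length X \<and> card {i. i < length X \<and> Y ! i \<noteq> X ! i} \<le> m}"

definition couplings :: "real measure \<Rightarrow> real measure \<Rightarrow> (real \<times> real) measure set" where
  "couplings \<mu> \<nu> = {\<gamma>. sets \<gamma> = sets (borel \<Otimes>\<^sub>M borel) \<and> prob_space \<gamma>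
       \<and> distr \<gamma> borel fst = \<mu> \<and> distr \<gamma> borel snd = \<nu>}"

definition W2sq :: "real measure \<Rightarrow> real measure \<Rightarrow> ennreal" where
  "W2sq \<mu> \<nu> = (INF \<gamma>\<in>couplings \<mu> \<nu>. \<integral>\<^sup>+ z. ennreal ((fst z - snd z)\<^sup>2) \<partial>\<gamma>)"

definition W2 :: "real measure \<Rightarrow> real measure \<Rightarrow> ennreal" where
  "W2 \<mu> \<nu> = (if W2sq \<mu> \<nu> = \<top> then \<top> else ennreal (sqrt (enn2real (W2sq \<mu> \<nu>))))"

text \<open>Finite-sample breakdown point of a statistic (Inf of empty set = infinity).\<close>
definition breakdown :: "(real list \<Rightarrow> real) \<Rightarrow> real list \<Rightarrow> ereal" where
  "breakdown T X = Inf {ereal (real m / real (length X)) | m. m \<le> length X \<and>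
      (SUP Y\<in>contam X m. ereal \<bar>T Y - T X\<bar>) = \<infinity>}"

definition post_breakdown_W2 :: "(real \<Rightarrow> real) \<Rightarrow> (real \<Rightarrow> real) \<Rightarrow> real list \<Rightarrow> ereal" where
  "post_breakdown_W2 \<rho> \<pi> X = Inf {ereal (real m / real (length X)) | m. m \<le> length X \<and>
      (SUP Y\<in>contam X m. W2 (mpost \<rho> \<pi> Y) (mpost \<rho> \<pi> X)) = \<top>}"

end

theory Submission
  imports Defs
begin

text \<open>A contamination keeping W2 between the posteriors of Y and X below r yields a coupling
  with mean squared displacement below r^2; by Markov's inequality this coupling changes
  P(theta \<le> x) by at most r^2/t^2 when x is shifted by t.  The cdf of the clean posterior
  crosses the level tau strictly between two points a < c, so for t large enough the tau-quantiles
  of all these posteriors lie in [a - t, c + t]: the quantile stays bounded as long as the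
  posterior does.\<close>

definition left_quantile :: "real measure \<Rightarrow> real \<Rightarrow> real" where
  "left_quantile \<mu> \<tau> = Inf {\<theta>. \<tau> \<le> measure \<mu> {..\<theta>}}"

lemma post_quantile_eq_left_quantile:
  "post_quantile \<rho> \<pi> \<tau> Y = left_quantile (mpost \<rho> \<pi> Y) \<tau>"
  by (simp add: post_quantile_def left_quantile_def)

lemma left_quantile_between:
  fixes \<mu> :: "real measure"
  assumes "finite_measure \<mu>" "sets \<mu> = sets borel"
    and below: "measure \<mu> {..a} < \<tau>" and above: "\<tau> \<le> measure \<mu> {..c}"
  shows "a \<le> left_quantile \<mu> \<tau>" "left_quantile \<mu> \<tau> \<le> c"
proof -
  interpret finite_measure \<mu> by fact
  have level_gt: "a < \<theta>" if "\<tau> \<le> measure \<mu> {..\<theta>}" for \<theta>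
  proof (rule ccontr)
    assume "\<not> a < \<theta>"
    then have "measure \<mu> {..\<theta>} \<le> measure \<mu> {..a}"
      by (intro finite_measure_mono) (auto simp: assms(2))
    with that below show False by simp
  qed
  show "a \<le> left_quantile \<mu> \<tau>"
    unfolding left_quantile_def
    by (rule cInf_greatest) (use above level_gt in \<open>auto intro: less_imp_le\<close>)
  show "left_quantile \<mu> \<tau> \<le> c"
    unfolding left_quantile_def
    by (rule cInf_lower) (use above level_gt in \<open>auto simp: bdd_below_def intro: less_imp_le\<close>)
qed

lemma W2_less_imp_coupling:
  assumes "W2 \<mu> \<nu> < ennreal r"
  shows "\<exists>\<gamma>\<in>couplings \<mu> \<nu>. (\<integral>\<^sup>+ z. ennreal ((fst z - snd z)\<^sup>2) \<partial>\<gamma>) < ennreal (r\<^sup>2)"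
proof -
  have finite: "W2sq \<mu> \<nu> \<noteq> \<top>"
    using assms by (auto simp: W2_def)
  then have "sqrt (enn2real (W2sq \<mu> \<nu>)) < r"
    using assms by (simp add: W2_def ennreal_less_iff)
  then have "enn2real (W2sq \<mu> \<nu>) < r\<^sup>2"
    by (smt (verit) enn2real_nonneg real_le_rsqrt)
  then have "W2sq \<mu> \<nu> < ennreal (r\<^sup>2)"
    using finite by (rule enn2real_less)
  then show ?thesis
    by (simp add: W2sq_def INF_less_iff)
qed

lemma coupling_marginal_cdfs:
  assumes "\<gamma> \<in> couplings \<mu> \<nu>"
  shows "measure \<mu> {..x} = measure \<gamma> {z. fst z \<le> x}"
    and "measure \<nu> {..x} = measure \<gamma> {z. snd z \<le> x}"
proof -
  have sets: "sets \<gamma> = sets (borel \<Otimes>\<^sub>M borel)"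
    and marginals: "distr \<gamma> borel fst = \<mu>" "distr \<gamma> borel snd = \<nu>"
    using assms by (auto simp: couplings_def)
  have space: "space \<gamma> = UNIV"
    using sets_eq_imp_space_eq[OF sets] by (simp add: space_pair_measure)
  have "fst \<in> measurable \<gamma> borel" "snd \<in> measurable \<gamma> borel"
    by (simp_all add: measurable_cong_sets[OF sets refl])
  then show "measure \<mu> {..x} = measure \<gamma> {z. fst z \<le> x}"
    and "measure \<nu> {..x} = measure \<gamma> {z. snd z \<le> x}"
    unfolding marginals[symmetric] by (simp_all add: measure_distr space vimage_def)
qed

lemma coupling_Markov_inequality:
  assumes coupling: "\<gamma> \<in> couplings \<mu> \<nu>"
    and cost: "(\<integral>\<^sup>+ z. ennreal ((fst z - snd z)\<^sup>2) \<partial>\<gamma>) \<le> ennreal E"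
    and "0 < t" "0 \<le> E"
  shows "measure \<gamma> {z. t < \<bar>fst z - snd z\<bar>} \<le> E / t\<^sup>2"
proof -
  define S where "S = {z::real \<times> real. t < \<bar>fst z - snd z\<bar>}"
  interpret prob_space \<gamma>
    using coupling by (simp add: couplings_def)
  have "{z \<in> space (borel \<Otimes>\<^sub>M borel). t < \<bar>fst z - snd z\<bar>} \<in> sets (borel \<Otimes>\<^sub>M borel)"
    by measurable
  then have S: "S \<in> sets \<gamma>"
    using coupling by (simp add: S_def couplings_def space_pair_measure)
  have "ennreal (t\<^sup>2) * emeasure \<gamma> S = (\<integral>\<^sup>+ z. ennreal (t\<^sup>2) * indicator S z \<partial>\<gamma>)"
    by (rule nn_integral_cmult_indicator[OF S, symmetric])
  also have "\<dots> \<le> (\<integral>\<^sup>+ z. ennreal ((fst z - snd z)\<^sup>2) \<partial>\<gamma>)"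
  proof (rule nn_integral_mono)
    fix z :: "real \<times> real"
    have "t\<^sup>2 \<le> (fst z - snd z)\<^sup>2" if "z \<in> S"
      using that \<open>0 < t\<close> unfolding S_def
      by (metis abs_le_square_iff abs_of_pos less_imp_le mem_Collect_eq)
    then show "ennreal (t\<^sup>2) * indicator S z \<le> ennreal ((fst z - snd z)\<^sup>2)"
      by (cases "z \<in> S") (simp_all add: ennreal_leI)
  qed
  also have "\<dots> \<le> ennreal E" by (rule cost)
  finally have "t\<^sup>2 * measure \<gamma> S \<le> E"
    using \<open>0 \<le> E\<close> by (simp add: emeasure_eq_measure flip: ennreal_mult'')
  then show ?thesis
    using \<open>0 < t\<close> by (simp add: S_def field_simps)
qed

lemma coupling_cdf_shift:
  assumes coupling: "\<gamma> \<in> couplings \<mu> \<nu>"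
    and cost: "(\<integral>\<^sup>+ z. ennreal ((fst z - snd z)\<^sup>2) \<partial>\<gamma>) \<le> ennreal E"
    and "0 < t" "0 \<le> E"
  shows "measure \<nu> {..x} - E / t\<^sup>2 \<le> measure \<mu> {..x + t}"
    and "measure \<mu> {..x - t} \<le> measure \<nu> {..x} + E / t\<^sup>2"
proof -
  interpret prob_space \<gamma>
    using coupling by (simp add: couplings_def)
  define S where "S = {z::real \<times> real. t < \<bar>fst z - snd z\<bar>}"
  have far: "measure \<gamma> S \<le> E / t\<^sup>2"
    unfolding S_def by (rule coupling_Markov_inequality[OF assms])
  have sets_pred: "{z. P z} \<in> sets \<gamma>" if "Measurable.pred (borel \<Otimes>\<^sub>M borel) P" for P
    using that coupling by (simp add: couplings_def pred_def space_pair_measure)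
  have measurable: "S \<in> sets \<gamma>" "{z. fst z \<le> y} \<in> sets \<gamma>" "{z. snd z \<le> y} \<in> sets \<gamma>" for y
    unfolding S_def by (rule sets_pred, measurable)+
  have "measure \<gamma> {z. snd z \<le> x} \<le> measure \<gamma> ({z. fst z \<le> x + t} \<union> S)"
    by (intro finite_measure_mono sets.Un measurable) (auto simp: S_def)
  also have "\<dots> \<le> measure \<gamma> {z. fst z \<le> x + t} + measure \<gamma> S"
    by (intro measure_Un_le measurable)
  finally show "measure \<nu> {..x} - E / t\<^sup>2 \<le> measure \<mu> {..x + t}"
    using far by (simp add: coupling_marginal_cdfs[OF coupling])
  have "measure \<gamma> {z. fst z \<le> x - t} \<le> measure \<gamma> ({z. snd z \<le> x} \<union> S)"
    by (intro finite_measure_mono sets.Un measurable) (auto simp: S_def)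
  also have "\<dots> \<le> measure \<gamma> {z. snd z \<le> x} + measure \<gamma> S"
    by (intro measure_Un_le measurable)
  finally show "measure \<mu> {..x - t} \<le> measure \<nu> {..x} + E / t\<^sup>2"
    using far by (simp add: coupling_marginal_cdfs[OF coupling])
qed

lemma left_quantile_bounded_W2:
  fixes \<nu> :: "real measure"
  assumes "real_distribution \<nu>" "0 < \<tau>" "\<tau> < 1"
  shows "\<exists>K. \<forall>\<mu>. real_distribution \<mu> \<longrightarrow> W2 \<mu> \<nu> < ennreal r \<longrightarrow>
           \<bar>left_quantile \<mu> \<tau> - left_quantile \<nu> \<tau>\<bar> \<le> K"
proof -
  interpret \<nu>: real_distribution \<nu> by fact
  obtain a where a: "measure \<nu> {..a} < \<tau>"
    using order_tendstoD(2)[OF \<nu>.cdf_lim_at_bot \<open>0 < \<tau>\<close>]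
    unfolding eventually_at_bot_linorder cdf_def by auto
  obtain c where c: "\<tau> < measure \<nu> {..c}"
    using order_tendstoD(1)[OF \<nu>.cdf_lim_at_top_prob \<open>\<tau> < 1\<close>]
    unfolding eventually_at_top_linorder cdf_def by auto
  have \<nu>_quantile: "a \<le> left_quantile \<nu> \<tau>" "left_quantile \<nu> \<tau> \<le> c"
    using left_quantile_between[OF \<nu>.finite_measure_axioms _ a less_imp_le[OF c]] by simp_all
  define \<delta> where "\<delta> = min (\<tau> - measure \<nu> {..a}) (measure \<nu> {..c} - \<tau>)"
  define t where "t = r\<^sup>2 / \<delta> + 1"
  have "0 < \<delta>"
    using a c by (simp add: \<delta>_def)
  then have "1 \<le> t"
    by (simp add: t_def)
  have "r\<^sup>2 / \<delta> < t"
    by (simp add: t_def)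
  also have "t \<le> t\<^sup>2"
    using \<open>1 \<le> t\<close> by (simp add: power2_eq_square)
  finally have small: "r\<^sup>2 / t\<^sup>2 < \<delta>"
    using \<open>0 < \<delta>\<close> \<open>1 \<le> t\<close> by (simp add: field_simps)
  have "\<bar>left_quantile \<mu> \<tau> - left_quantile \<nu> \<tau>\<bar> \<le> c - a + t"
    if \<mu>: "real_distribution \<mu>" and close: "W2 \<mu> \<nu> < ennreal r" for \<mu>
  proof -
    interpret \<mu>: real_distribution \<mu> by (rule \<mu>)
    obtain \<gamma> where \<gamma>: "\<gamma> \<in> couplings \<mu> \<nu>"
      and cost: "(\<integral>\<^sup>+ z. ennreal ((fst z - snd z)\<^sup>2) \<partial>\<gamma>) < ennreal (r\<^sup>2)"
      using W2_less_imp_coupling[OF close] by blast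
    note shift = coupling_cdf_shift[OF \<gamma> less_imp_le[OF cost] _ zero_le_power2]
    have "measure \<mu> {..a - t} < \<tau>" "\<tau> \<le> measure \<mu> {..c + t}"
      using shift(1)[of t c] shift(2)[of t a] small \<open>1 \<le> t\<close> by (simp_all add: \<delta>_def)
    then have "a - t \<le> left_quantile \<mu> \<tau>" "left_quantile \<mu> \<tau> \<le> c + t"
      using left_quantile_between[OF \<mu>.finite_measure_axioms] by simp_all
    then show ?thesis
      using \<nu>_quantile by linarith
  qed
  then show ?thesis
    by blast
qed

lemma borel_measurable_mpost_dens:
  assumes "\<rho> \<in> borel_measurable borel" "\<pi> \<in> borel_measurable borel"
  shows "mpost_dens \<rho> \<pi> Y \<in> borel_measurable borel"
proof -
  have "(\<lambda>\<theta>. \<Sum>y\<leftarrow>Y. \<rho> (y - \<theta>)) \<in> borel_measurable borel"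
  proof (induction Y)
    case (Cons y Y)
    have "(\<lambda>\<theta>. \<rho> (y - \<theta>)) \<in> borel_measurable borel"
      by (rule measurable_compose[OF _ assms(1)]) simp
    with Cons show ?case by simp
  qed simp
  then show ?thesis
    unfolding mpost_dens_def[abs_def] using assms(2) by measurable
qed

lemma real_distribution_mpost:
  assumes "\<rho> \<in> borel_measurable borel" "\<pi> \<in> borel_measurable borel" "\<And>\<theta>. 0 \<le> \<pi> \<theta>"
    and norm: "0 < mpost_norm \<rho> \<pi> Y" "mpost_norm \<rho> \<pi> Y < \<top>"
  shows "real_distribution (mpost \<rho> \<pi> Y)"
proof -
  define Z where "Z = enn2real (mpost_norm \<rho> \<pi> Y)"
  have Z: "mpost_norm \<rho> \<pi> Y = ennreal Z" "0 < Z"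
    using norm by (auto simp: Z_def enn2real_positive_iff less_top[symmetric])
  have dens: "mpost_dens \<rho> \<pi> Y \<in> borel_measurable borel"
    by (rule borel_measurable_mpost_dens[OF assms(1,2)])
  have "emeasure (mpost \<rho> \<pi> Y) UNIV = (\<integral>\<^sup>+ \<theta>. ennreal (mpost_dens \<rho> \<pi> Y \<theta> / Z) \<partial>lborel)"
    unfolding mpost_def Z_def[symmetric] using dens by (subst emeasure_density) auto
  also have "\<dots> = (\<integral>\<^sup>+ \<theta>. ennreal (mpost_dens \<rho> \<pi> Y \<theta>) * ennreal (1 / Z) \<partial>lborel)"
    using Z assms(3)
    by (intro nn_integral_cong) (simp add: mpost_dens_def ennreal_mult[symmetric])
  also have "\<dots> = mpost_norm \<rho> \<pi> Y * ennreal (1 / Z)"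
    unfolding mpost_norm_def using dens by (subst nn_integral_multc) auto
  also have "\<dots> = 1"
    using Z by (simp add: ennreal_mult[symmetric])
  finally have "prob_space (mpost \<rho> \<pi> Y)"
    by (intro prob_spaceI) (simp add: mpost_def)
  then show ?thesis
    by (simp add: real_distribution_def real_distribution_axioms_def mpost_def)
qed

lemma post_breakdown_W2_le_breakdown:
  assumes "\<And>m. (SUP Y\<in>contam X m. W2 (mpost \<rho> \<pi> Y) (mpost \<rho> \<pi> X)) \<noteq> \<top> \<Longrightarrow>
             \<exists>K. \<forall>Y\<in>contam X m. \<bar>T Y - T X\<bar> \<le> K"
  shows "post_breakdown_W2 \<rho> \<pi> X \<le> breakdown T X"
proof -
  have "(SUP Y\<in>contam X m. W2 (mpost \<rho> \<pi> Y) (mpost \<rho> \<pi> X)) = \<top>"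
    if "(SUP Y\<in>contam X m. ereal \<bar>T Y - T X\<bar>) = \<infinity>" for m
  proof (rule ccontr)
    assume "(SUP Y\<in>contam X m. W2 (mpost \<rho> \<pi> Y) (mpost \<rho> \<pi> X)) \<noteq> \<top>"
    then obtain K where "\<forall>Y\<in>contam X m. \<bar>T Y - T X\<bar> \<le> K"
      using assms by blast
    then have "(SUP Y\<in>contam X m. ereal \<bar>T Y - T X\<bar>) \<le> ereal K"
      by (intro SUP_least) simp
    with that show False
      by simp
  qed
  then show ?thesis
    unfolding breakdown_def post_breakdown_W2_def
    by (intro Inf_superset_mono) blast
qed

theorem mainTheorem16:
  fixes \<rho> \<pi> :: "real \<Rightarrow> real" and X :: "real list" and \<tau> :: real
  assumes "\<rho> \<in> borel_measurable borel"
    and "\<pi> \<in> borel_measurable borel"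
    and "\<And>\<theta>. \<pi> \<theta> \<ge> 0"
    and "\<And>Y. length Y = length X \<Longrightarrow> 0 < mpost_norm \<rho> \<pi> Y \<and> mpost_norm \<rho> \<pi> Y < \<top>"
    and "\<And>Y. length Y = length X \<Longrightarrow> (\<integral>\<^sup>+ \<theta>. ennreal (\<theta>\<^sup>2) \<partial>(mpost \<rho> \<pi> Y)) < \<top>"
    and "length X \<ge> 1"
    and "0 < \<tau>" and "\<tau> < 1"
  shows "breakdown (post_quantile \<rho> \<pi> \<tau>) X \<ge> post_breakdown_W2 \<rho> \<pi> X"
proof (rule post_breakdown_W2_le_breakdown)
  fix m
  assume "(SUP Y\<in>contam X m. W2 (mpost \<rho> \<pi> Y) (mpost \<rho> \<pi> X)) \<noteq> \<top>" (is "?M \<noteq> \<top>")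
  then have close: "W2 (mpost \<rho> \<pi> Y) (mpost \<rho> \<pi> X) < ennreal (enn2real ?M + 1)"
    if "Y \<in> contam X m" for Y
    using SUP_upper[OF that, of "\<lambda>Y. W2 (mpost \<rho> \<pi> Y) (mpost \<rho> \<pi> X)"]
    by (metis ennreal_enn2real enn2real_nonneg ennreal_lessI less_add_one less_top
        order_le_less_trans)
  have distr: "real_distribution (mpost \<rho> \<pi> Y)" if "length Y = length X" for Y
    using real_distribution_mpost[OF assms(1-3)] assms(4)[OF that] by blast
  obtain K where "\<forall>\<mu>. real_distribution \<mu> \<longrightarrow> W2 \<mu> (mpost \<rho> \<pi> X) < ennreal (enn2real ?M + 1) \<longrightarrow>
      \<bar>left_quantile \<mu> \<tau> - left_quantile (mpost \<rho> \<pi> X) \<tau>\<bar> \<le> K"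
    using left_quantile_bounded_W2[OF distr[OF refl] \<open>0 < \<tau>\<close> \<open>\<tau> < 1\<close>] by blast
  then show "\<exists>K. \<forall>Y\<in>contam X m. \<bar>post_quantile \<rho> \<pi> \<tau> Y - post_quantile \<rho> \<pi> \<tau> X\<bar> \<le> K"
    using close distr by (auto simp: contam_def post_quantile_eq_left_quantile)
qed

end
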